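(* In a public goods economy (as in the context), let $\mathbf{a}$ be an outcome and suppose there is a path $P$ of outcomes with endpoints $\mathbf{x},\mathbf{y}$ such that $\mathbf{u}(\mathbf{p})\le\mathbf{u}(\mathbf{a})$ for every $\mathbf{p}\in P$. If $\mathbf{a}'$ is a deviation from $\mathbf{a}$ for some coalition $C$ satisfying $\mathbf{a}'\lneq\mathbf{x}$, then $\mathbf{a}'$ also satisfies $\mathbf{a}'\lneq\mathbf{y}$.
   Context: Agents $N=\{1,\dots,n\}$; outcomes are vectors in $[0,1]^n$. Vector orderings: $\mathbf{x}\ge\mathbf{y}$ means $x_i\ge y_i$ for all $i$; $\mathbf{x}>\mathbf{y}$ means $x_i>y_i$ for all $i$; $\mathbf{x}\gneq\mathbf{y}$ means $\mathbf{x}\ge\mathbf{y}$ and $x_j>y_j$ for some $j$ ($\mathbf{x}\lneq\mathbf{y}$ means $\mathbf{y}\gneq\mathbf{x}$). For $C\subseteq N$, $\mathbf{v}_C$ is the restriction of $\mathbf{v}$ to coordinates in $C$. The utility function $\mathbf{u}:[0,1]^n\to[0,1]^n$ is continuous, concave, and has positive externalities: whenever $\mathbf{a}\gneq\mathbf{a}'$ and $a_i=a'_i$, then $u_i(\mathbf{a})>u_i(\mathbf{a}')$. A coalition is a nonempty $C\subseteq N$; $\mathbf{a}'$ is a deviation from $\mathbf{a}$ for $C$ if $\mathbf{a}'_{N\setminus C}=\mathbf{0}$ and $\mathbf{u}_C(\mathbf{a}')>\mathbf{u}_C(\mathbf{a})$. A path with endpoints $\mathbf{x},\mathbf{y}$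 is the image of a continuous $f:[0,1]\to[0,1]^n$ with $f(0)=\mathbf{x}$, $f(1)=\mathbf{y}$. *)

theory Defs
  imports "HOL-Analysis.Analysis"
begin

text \<open>Outcomes are vectors in the unit cube [0,1]^n, indexed by a finite type 'n of agents.\<close>

definition unit_cube :: "(real ^ 'n) set" where
  "unit_cube = {x. \<forall>i. 0 \<le> x $ i \<and> x $ i \<le> 1}"

definition vgneq :: "real ^ 'n \<Rightarrow> real ^ 'n \<Rightarrow> bool" where
  "vgneq x y \<longleftrightarrow> (\<forall>i. x $ i \<ge> y $ i) \<and> (\<exists>j. x $ j > y $ j)"

definition public_goods_utility :: "(real ^ 'n \<Rightarrow> real ^ 'n) \<Rightarrow> bool" where
  "public_goods_utility u \<longleftrightarrow>
     u ` unit_cube \<subseteq> unit_cube \<and>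
     continuous_on unit_cube u \<and>
     (\<forall>i. concave_on unit_cube (\<lambda>x. u x $ i)) \<and>
     (\<forall>a\<in>unit_cube. \<forall>a'\<in>unit_cube. \<forall>i.
        vgneq a a' \<and> a $ i = a' $ i \<longrightarrow> u a $ i > u a' $ i)"

definition deviation ::
  "(real ^ 'n \<Rightarrow> real ^ 'n) \<Rightarrow> 'n set \<Rightarrow> real ^ 'n \<Rightarrow> real ^ 'n \<Rightarrow> bool" where
  "deviation u C a a' \<longleftrightarrow> C \<noteq> {} \<and> a' \<in> unit_cube \<and>
     (\<forall>i. i \<notin> C \<longrightarrow> a' $ i = 0) \<and> (\<forall>i\<in>C. u a' $ i > u a $ i)"

definition is_path_between :: "(real ^ 'n) set \<Rightarrow> real ^ 'n \<Rightarrow> real ^ 'n \<Rightarrow> bool" where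
  "is_path_between P x y \<longleftrightarrow>
     (\<exists>f :: real \<Rightarrow> real ^ 'n. continuous_on {0..1} f \<and> f ` {0..1} \<subseteq> unit_cube \<and>
        f 0 = x \<and> f 1 = y \<and> P = f ` {0..1})"

end

theory Submission
  imports Defs
begin

text \<open>Measure how far the path lies above \<open>a'\<close> on the coalition by
  \<open>g t = min\<^sub>i\<^sub>\<in>\<^sub>C (f t $ i - a' $ i)\<close>. At a zero of \<open>g\<close> the path point
  \<open>p\<close> satisfies \<open>p \<ge> a'\<close> with equality in some coordinate \<open>i \<in> C\<close>, so positive
  externalities give \<open>u p $ i \<ge> u a' $ i > u a $ i\<close>, contradicting \<open>u p \<le> u a\<close>.
  Hence \<open>g\<close> has no zero on the path; as \<open>g 0 > 0\<close>, the intermediate value theorem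
  yields \<open>g 1 > 0\<close>, i.e. \<open>y\<close> exceeds \<open>a'\<close> on \<open>C\<close>, and outside \<open>C\<close> the
  deviation \<open>a'\<close> vanishes.\<close>

lemma continuous_on_Min:
  fixes h :: "'i \<Rightarrow> 'a::topological_space \<Rightarrow> real"
  assumes "finite C" "C \<noteq> {}" "\<And>i. i \<in> C \<Longrightarrow> continuous_on S (h i)"
  shows "continuous_on S (\<lambda>t. Min ((\<lambda>i. h i t) ` C))"
  using assms
proof (induction C rule: finite_ne_induct)
  case (singleton i)
  then show ?case by simp
next
  case (insert i F)
  have "(\<lambda>t. Min ((\<lambda>j. h j t) ` insert i F)) = (\<lambda>t. min (h i t) (Min ((\<lambda>j. h j t) ` F)))"
    using insert by auto
  then show ?case
    using insert by (simp only:) (intro continuous_on_min; simp)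
qed

lemma continuous_on_interval_pos_if_no_zero:
  fixes g :: "real \<Rightarrow> real"
  assumes "continuous_on {0..1} g" "\<And>t. t \<in> {0..1} \<Longrightarrow> g t \<noteq> 0" "g 0 > 0"
  shows "g 1 > 0"
proof (rule ccontr)
  assume "\<not> g 1 > 0"
  then obtain t where "0 \<le> t" "t \<le> 1" "g t = 0"
    using IVT2'[of g 1 0 0] assms(1,3) by auto
  then show False
    using assms(2) by auto
qed

lemma vgneq_iff_ge_and_neq: "vgneq x y \<longleftrightarrow> (\<forall>i. y $ i \<le> x $ i) \<and> x \<noteq> y"
  unfolding vgneq_def vec_eq_iff by (auto simp: less_le) metis+

lemma deviation_strictly_below_dominated_outcome:
  assumes u: "public_goods_utility u"
    and dev: "deviation u C a a'"
    and p: "p \<in> unit_cube" "\<forall>i. u p $ i \<le> u a $ i" "\<forall>i\<in>C. a' $ i \<le> p $ i"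
    and i: "i \<in> C"
  shows "a' $ i < p $ i"
proof (rule ccontr)
  assume "\<not> a' $ i < p $ i"
  with p(3) i have eq: "p $ i = a' $ i"
    by (meson antisym not_less)
  have a': "a' \<in> unit_cube" and gain: "u a' $ i > u a $ i"
    using dev i unfolding deviation_def by auto
  have ge: "a' $ j \<le> p $ j" for j
    using p(1,3) dev unfolding deviation_def unit_cube_def by (cases "j \<in> C") auto
  have "u a' $ i \<le> u p $ i"
  proof (cases "p = a'")
    case False
    with ge have "vgneq p a'"
      by (simp add: vgneq_iff_ge_and_neq)
    then show ?thesis
      using u p(1) a' eq unfolding public_goods_utility_def by (metis less_imp_le)
  qed simp
  with gain p(2) show False
    by (meson not_less order_trans)
qed

lemma vgneq_deviation_if_coalition_gt:
  assumes "deviation u C a a'" "y \<in> unit_cube" "\<forall>i\<in>C. a' $ i < y $ i"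
  shows "vgneq y a'"
proof -
  have "a' $ i \<le> y $ i" for i
    using assms less_imp_le[of "a' $ i" "y $ i"] unfolding deviation_def unit_cube_def by (cases "i \<in> C") auto
  moreover obtain j where "j \<in> C"
    using assms(1) unfolding deviation_def by auto
  ultimately show ?thesis
    using assms(3) unfolding vgneq_def by auto
qed

lemma path_stays_above_on_coordinates:
  fixes f :: "real \<Rightarrow> real ^ 'n"
  assumes f: "continuous_on {0..1} f"
    and C: "C \<noteq> {}"
    and barrier: "\<And>t. t \<in> {0..1} \<Longrightarrow> \<forall>i\<in>C. b $ i \<le> f t $ i \<Longrightarrow> \<forall>i\<in>C. b $ i < f t $ i"
    and start: "\<forall>i\<in>C. b $ i < f 0 $ i"
  shows "\<forall>i\<in>C. b $ i < f 1 $ i"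
proof -
  define g where "g t = Min ((\<lambda>i. f t $ i - b $ i) ` C)" for t
  have g_pos_iff: "g t > 0 \<longleftrightarrow> (\<forall>i\<in>C. b $ i < f t $ i)" for t
    unfolding g_def using C by simp
  have g_nonneg_iff: "g t \<ge> 0 \<longleftrightarrow> (\<forall>i\<in>C. b $ i \<le> f t $ i)" for t
    unfolding g_def using C by simp
  have "continuous_on {0..1} g"
    unfolding g_def using C by (intro continuous_on_Min continuous_intros continuous_on_component f) auto
  moreover have "g t \<noteq> 0" if "t \<in> {0..1}" for t
    using barrier[OF that] g_pos_iff[of t] g_nonneg_iff[of t] by auto
  moreover have "g 0 > 0"
    using start g_pos_iff by simp
  ultimately have "g 1 > 0"
    by (rule continuous_on_interval_pos_if_no_zero)
  then show ?thesis
    using g_pos_iff by simp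
qed

theorem lemma2:
  fixes u :: "real ^ 'n \<Rightarrow> real ^ 'n"
    and a a' x y :: "real ^ 'n"
    and P :: "(real ^ 'n) set"
    and C :: "'n set"
  assumes "public_goods_utility u"
    and "a \<in> unit_cube"
    and "is_path_between P x y"
    and "\<forall>p\<in>P. \<forall>i. u p $ i \<le> u a $ i"
    and "deviation u C a a'"
    and "vgneq x a'"
  shows "vgneq y a'"
proof -
  obtain f :: "real \<Rightarrow> real ^ 'n" where f: "continuous_on {0..1} f" "f ` {0..1} \<subseteq> unit_cube"
    "f 0 = x" "f 1 = y" "P = f ` {0..1}"
    using assms(3) unfolding is_path_between_def by blast
  have C: "C \<noteq> {}"
    using assms(5) unfolding deviation_def by simp
  have above: "\<forall>i\<in>C. a' $ i < f t $ i" if "t \<in> {0..1}" "\<forall>i\<in>C. a' $ i \<le> f t $ i" for t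
  proof -
    have "f t \<in> unit_cube" "\<forall>i. u (f t) $ i \<le> u a $ i"
      using that(1) f(2,5) assms(4) by auto
    then show ?thesis
      using deviation_strictly_below_dominated_outcome[OF assms(1,5)] that(2) by blast
  qed
  have "\<forall>i\<in>C. a' $ i < f 0 $ i"
    using above[of 0] assms(6) f(3) unfolding vgneq_def by simp
  then have "\<forall>i\<in>C. a' $ i < y $ i"
    using path_stays_above_on_coordinates[OF f(1) C above] f(4) by simp
  moreover have "y \<in> unit_cube"
    using f(2,4) by auto
  ultimately show ?thesis
    using vgneq_deviation_if_coalition_gt[OF assms(5)] by blast
qed

end
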